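(* Assume the setting below, let $\nu\in(0,1)$, $\mu>0$, let $\theta^*\in\Theta$ be fixed (non-random), and let $s>0$ satisfy $$s<\frac{2\mu n}{C_b\,\nu\,(\nu C_b+4\mu b)} .$$ Then for every $\Theta$-valued random vector $\hat\theta$ that is a measurable function of the data $\mathcal D$, $$\mathbb E\exp\Big[s\Big(\nu(P-P_n)\Big(\sum_{j=1}^M(\hat\theta_j-\theta^*_j)\ell_{e_j}\Big)-\mu\,\hat\theta^\top\mathbf H\theta^*\Big)-K(\hat\theta)\Big]\le1 .$$
   Context: Setting: $(X,Y)$ random pair in $\mathcal X\times\mathbb R$ with $|Y|\le b$ a.s. ($b>0$); data $\mathcal D=\{(X_i,Y_i)\}_{i=1}^n$ i.i.d. copies of $(X,Y)$; $f_1,\dots,f_M$ deterministic measurable functions with $\max_j|f_j(X)|\le b$ a.s.; $\Theta=\{\theta\in\mathbb R^M:\theta_j\ge0,\ \sum_j\theta_j=1\}$, $e_j$ canonical basis of $\mathbb R^M$; $\|f\|_2=\sqrt{\mathbb E f(X)^2}$; $\mathbf H$ is the $M\times M$ matrix with $\mathbf H_{jk}=\|f_j-f_k\|_2^2$; prior $\pi$ with $\pi_j>0$, $\sum_j\pi_j=1$, and $K(\theta)=\sum_j\theta_j\log(1/\pi_j)$. The loss satisfies: for all $f,g\in[-b,b]$, $|\ell(Y,f)-\ell(Y,g)|\le C_b|f-g|$ a.s. Notation: $\ell_{e_j}(y,x)=\ell(y,f_j(x))$; for $g(y,x)$ (possibly data-dependent), $Pg=\mathbb E[g(Y,X)\mid\mathcal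 D]$ with $(X,Y)$ independent of $\mathcal D$, and $P_ng=\frac1n\sum_ig(Y_i,X_i)$. *)

theory Defs
  imports "HOL-Probability.Probability"
begin

definition simplexM :: "nat \<Rightarrow> (nat \<Rightarrow> real) set" where
  "simplexM M = {\<theta>. (\<forall>j<M. 0 \<le> \<theta> j) \<and> (\<Sum>j<M. \<theta> j) = 1}"

definition Kdiv :: "nat \<Rightarrow> (nat \<Rightarrow> real) \<Rightarrow> (nat \<Rightarrow> real) \<Rightarrow> real" where
  "Kdiv M \<pi> \<theta> = (\<Sum>j<M. \<theta> j * ln (1 / \<pi> j))"

text \<open>H_jk = squared L2 distance of f_j and f_k under the law of X (D is the law of (X,Y)).\<close>
definition Hmat :: "('x \<times> real) measure \<Rightarrow> (nat \<Rightarrow> 'x \<Rightarrow> real) \<Rightarrow> nat \<Rightarrow> nat \<Rightarrow> real" where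
  "Hmat D f j k = (\<integral>z. (f j (fst z) - f k (fst z))\<^sup>2 \<partial>D)"

end

theory Submission
  imports Defs
begin

text \<open>
  With \<open>G\<^sub>j = \<ell>\<^sub>e\<^sub>j - \<Sum>\<^sub>k \<theta>*\<^sub>k \<ell>\<^sub>e\<^sub>k\<close> and \<open>\<Sum>\<^sub>j \<theta>\<^sub>j = 1\<close>, the loss difference is \<open>\<Sum>\<^sub>j \<theta>\<^sub>j G\<^sub>j\<close>, so the exponent is
  a \<open>\<theta>\<close>-convex combination of the expert exponents
  \<open>a\<^sub>j = ln \<pi>\<^sub>j - s\<mu>(H\<theta>*)\<^sub>j + (s\<nu>/n) \<Sum>\<^sub>i (PG\<^sub>j - G\<^sub>j(Z\<^sub>i))\<close>, and by convexity of \<open>exp\<close>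
  the integrand is dominated by \<open>\<Sum>\<^sub>j exp a\<^sub>j\<close>, which no longer depends on \<open>\<theta>\<close>.
  The Lipschitz property gives \<open>|G\<^sub>j| \<le> 2bC\<^sub>b\<close> and \<open>PG\<^sub>j\<^sup>2 \<le> C\<^sub>b\<^sup>2 (H\<theta>*)\<^sub>j\<close>, so Bernstein's bound on the
  moment generating function of the i.i.d. sum yields \<open>E exp a\<^sub>j \<le> \<pi>\<^sub>j\<close> exactly under the condition
  on \<open>s\<close>; summing over \<open>j\<close> gives \<open>\<Sum>\<^sub>j \<pi>\<^sub>j = 1\<close>.
\<close>

lemma exp_le_inverse_one_minus:
  fixes x :: real
  assumes "x < 1"
  shows "exp x \<le> 1 / (1 - x)"
proof -
  have "1 - x \<le> exp (- x)"
    using exp_ge_add_one_self[of "- x"] by simp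
  then have "(1 - x) * exp x \<le> 1"
    using mult_right_mono[of "1 - x" "exp (- x)" "exp x"] by (simp add: exp_minus field_simps)
  then show ?thesis
    using assms by (simp add: field_simps)
qed

lemma exp_le_one_plus_quadratic:
  fixes y :: real
  assumes "\<bar>y\<bar> < 1"
  shows "exp y \<le> 1 + y + y\<^sup>2 / (2 * (1 - \<bar>y\<bar>))"
proof -
  obtain t where t: "\<bar>t\<bar> \<le> \<bar>y\<bar>"
    and taylor: "exp y = (\<Sum>m<2. y ^ m / fact m) + exp t / fact 2 * y\<^sup>2"
    using Maclaurin_exp_le[of y 2] by blast
  have "exp t \<le> 1 / (1 - \<bar>y\<bar>)"
    using t exp_le_inverse_one_minus[OF assms] by (meson abs_ge_self exp_le_cancel_iff order_trans)
  then have "exp t / 2 * y\<^sup>2 \<le> 1 / (1 - \<bar>y\<bar>) / 2 * y\<^sup>2"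
    by (intro mult_right_mono divide_right_mono) auto
  also have "\<dots> = y\<^sup>2 / (2 * (1 - \<bar>y\<bar>))"
    by simp
  finally show ?thesis
    using taylor by (simp add: numeral_2_eq_2)
qed

lemma power2_weighted_mean_le:
  fixes w d :: "'a \<Rightarrow> real"
  assumes "finite A" and "\<And>k. k \<in> A \<Longrightarrow> 0 \<le> w k" and "sum w A = 1"
  shows "(\<Sum>k\<in>A. w k * d k)\<^sup>2 \<le> (\<Sum>k\<in>A. w k * (d k)\<^sup>2)"
proof -
  define m where "m = (\<Sum>k\<in>A. w k * d k)"
  have "0 \<le> (\<Sum>k\<in>A. w k * (d k - m)\<^sup>2)"
    using assms by (intro sum_nonneg) auto
  also have "\<dots> = (\<Sum>k\<in>A. w k * (d k)\<^sup>2) - 2 * m * (\<Sum>k\<in>A. w k * d k) + m\<^sup>2 * sum w A"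
    by (simp add: power2_diff algebra_simps sum.distrib sum_subtractf sum_distrib_left sum_distrib_right)
  finally show ?thesis
    using assms(3) unfolding m_def by (simp add: power2_eq_square)
qed

lemma exp_simplex_combination_le:
  assumes "\<theta> \<in> simplexM M"
  shows "exp (\<Sum>j<M. \<theta> j * a j) \<le> (\<Sum>j<M. exp (a j))"
proof -
  have \<theta>_nonneg: "\<And>j. j < M \<Longrightarrow> 0 \<le> \<theta> j" and \<theta>_sum: "(\<Sum>j<M. \<theta> j) = 1"
    using assms by (auto simp: simplexM_def)
  have \<theta>_le_1: "\<theta> j \<le> 1" if "j < M" for j
    using member_le_sum[of j "{..<M}" \<theta>] \<theta>_nonneg \<theta>_sum that by auto
  have "{..<M} \<noteq> {}"
    using \<theta>_sum by auto
  then have "exp (\<Sum>j<M. \<theta> j *\<^sub>R a j) \<le> (\<Sum>j<M. \<theta> j * exp (a j))"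
    using \<theta>_sum \<theta>_nonneg by (intro convex_on_sum[OF _ _ exp_convex]) auto
  then have "exp (\<Sum>j<M. \<theta> j * a j) \<le> (\<Sum>j<M. \<theta> j * exp (a j))"
    by simp
  also have "\<dots> \<le> (\<Sum>j<M. exp (a j))"
    using \<theta>_le_1 by (intro sum_mono) (simp add: mult_left_le_one_le)
  finally show ?thesis .
qed

lemma step_size_conditions:
  fixes n :: nat and b Cb \<nu> \<mu> s :: real
  assumes "0 < b" "0 < Cb" "0 < \<nu>" "0 < \<mu>" "0 < s"
    and s_bound: "s < 2 * \<mu> * real n / (Cb * \<nu> * (\<nu> * Cb + 4 * \<mu> * b))"
  defines "l \<equiv> s * \<nu> / real n"
  shows "0 < n" and "l * (2 * b * Cb) < 1"
    and "real n * l\<^sup>2 * Cb\<^sup>2 / (2 * (1 - l * (2 * b * Cb))) \<le> s * \<mu>"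
proof -
  have "0 < Cb * \<nu> * (\<nu> * Cb + 4 * \<mu> * b)"
    using assms by (intro mult_pos_pos add_pos_pos) auto
  then have key: "s * \<nu>\<^sup>2 * Cb\<^sup>2 + 4 * s * \<nu> * b * Cb * \<mu> < 2 * \<mu> * real n"
    using s_bound by (simp add: pos_less_divide_eq algebra_simps power2_eq_square)
  show n_pos: "0 < n"
    using key assms by (cases n) (auto intro: add_pos_pos)
  have "0 \<le> s * \<nu>\<^sup>2 * Cb\<^sup>2"
    using assms by simp
  then have "s * \<nu> * 2 * b * Cb * (2 * \<mu>) < real n * (2 * \<mu>)"
    using key by (simp add: algebra_simps)
  then show lc: "l * (2 * b * Cb) < 1"
    unfolding l_def using n_pos assms by (simp add: field_simps)
  have "real n * l\<^sup>2 * Cb\<^sup>2 = s / real n * (s * \<nu>\<^sup>2 * Cb\<^sup>2)"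
    unfolding l_def using n_pos by (simp add: field_simps power2_eq_square)
  also have "\<dots> \<le> s / real n * (2 * \<mu> * real n - 4 * s * \<nu> * b * Cb * \<mu>)"
    using key assms by (intro mult_left_mono) auto
  also have "\<dots> = s * \<mu> * (2 * (1 - l * (2 * b * Cb)))"
    unfolding l_def using n_pos by (simp add: field_simps)
  finally show "real n * l\<^sup>2 * Cb\<^sup>2 / (2 * (1 - l * (2 * b * Cb))) \<le> s * \<mu>"
    using lc by (subst pos_divide_le_eq) (auto simp: mult_ac)
qed

context prob_space
begin

lemma integrable_exp_centred:
  fixes g :: "'a \<Rightarrow> real"
  assumes "g \<in> borel_measurable M" and "AE z in M. \<bar>g z\<bar> \<le> c"
  shows "integrable M (\<lambda>z. exp (l * (expectation g - g z)))"
proof (rule integrable_const_bound[where B = "exp (\<bar>l\<bar> * (\<bar>expectation g\<bar> + c))"])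
  show "AE z in M. norm (exp (l * (expectation g - g z))) \<le> exp (\<bar>l\<bar> * (\<bar>expectation g\<bar> + c))"
    using assms(2)
  proof eventually_elim
    case (elim z)
    have "l * (expectation g - g z) \<le> \<bar>l\<bar> * \<bar>expectation g - g z\<bar>"
      by (metis abs_ge_self abs_mult)
    also have "\<dots> \<le> \<bar>l\<bar> * (\<bar>expectation g\<bar> + c)"
      using elim by (intro mult_left_mono) auto
    finally show ?case
      by simp
  qed
qed (use assms(1) in simp)

lemma centred_mgf_le:
  fixes g :: "'a \<Rightarrow> real"
  assumes g_meas: "g \<in> borel_measurable M" and g_bdd: "AE z in M. \<bar>g z\<bar> \<le> c"
    and l: "0 \<le> l" "l * c < 1"
  shows "expectation (\<lambda>z. exp (l * (expectation g - g z)))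
           \<le> exp (l\<^sup>2 * expectation (\<lambda>z. (g z)\<^sup>2) / (2 * (1 - l * c)))"
proof -
  define K where "K = l\<^sup>2 / (2 * (1 - l * c))"
  have int_g: "integrable M g"
    using g_meas g_bdd by (intro integrable_const_bound[where B = c]) auto
  have int_g2: "integrable M (\<lambda>z. (g z)\<^sup>2)"
    using g_meas g_bdd by (intro integrable_const_bound[where B = "c\<^sup>2"])
      (auto elim!: eventually_mono, metis abs_ge_zero power2_abs power_mono)
  have "integrable M (\<lambda>z. exp (- l * expectation g) * exp (l * (expectation g - g z)))"
    using g_meas g_bdd by (intro integrable_mult_right integrable_exp_centred)
  then have int_exp: "integrable M (\<lambda>z. exp (- l * g z))"
    by (simp add: exp_add[symmetric] algebra_simps)
  have "AE z in M. exp (- l * g z) \<le> 1 - l * g z + K * (g z)\<^sup>2"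
    using g_bdd
  proof eventually_elim
    case (elim z)
    have small: "\<bar>- l * g z\<bar> \<le> l * c"
      using elim l by (simp add: abs_mult mult_left_mono)
    have "exp (- l * g z) \<le> 1 + - l * g z + (- l * g z)\<^sup>2 / (2 * (1 - \<bar>- l * g z\<bar>))"
      using small l by (intro exp_le_one_plus_quadratic) simp
    also have "\<dots> \<le> 1 + - l * g z + (- l * g z)\<^sup>2 / (2 * (1 - l * c))"
      using small l by (intro add_left_mono divide_left_mono mult_pos_pos) auto
    finally show ?case
      unfolding K_def by (simp add: power_mult_distrib)
  qed
  then have "expectation (\<lambda>z. exp (- l * g z)) \<le> expectation (\<lambda>z. 1 - l * g z + K * (g z)\<^sup>2)"
    using int_exp int_g int_g2 by (intro integral_mono_AE) auto
  also have "\<dots> = 1 + (- l * expectation g + K * expectation (\<lambda>z. (g z)\<^sup>2))"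
    using int_g int_g2 by (simp add: prob_space)
  also have "\<dots> \<le> exp (- l * expectation g + K * expectation (\<lambda>z. (g z)\<^sup>2))"
    by (rule exp_ge_add_one_self)
  finally have mgf_neg: "expectation (\<lambda>z. exp (- l * g z))
      \<le> exp (- l * expectation g + K * expectation (\<lambda>z. (g z)\<^sup>2))" .
  have "expectation (\<lambda>z. exp (l * (expectation g - g z)))
      = expectation (\<lambda>z. exp (l * expectation g) * exp (- l * g z))"
    by (simp add: exp_add[symmetric] algebra_simps)
  also have "\<dots> = exp (l * expectation g) * expectation (\<lambda>z. exp (- l * g z))"
    by (rule integral_mult_right_zero)
  also have "\<dots> \<le> exp (l * expectation g) * exp (- l * expectation g + K * expectation (\<lambda>z. (g z)\<^sup>2))"
    using mgf_neg by (intro mult_left_mono) auto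
  finally show ?thesis
    unfolding K_def by (simp add: exp_add[symmetric])
qed

lemma iid_centred_sum_mgf_le:
  fixes g :: "'a \<Rightarrow> real"
  assumes g_meas: "g \<in> borel_measurable M" and g_bdd: "AE z in M. \<bar>g z\<bar> \<le> c"
    and l: "0 \<le> l" "l * c < 1"
  shows "(\<integral>\<^sup>+\<omega>. ennreal (exp (l * (\<Sum>i<n. expectation g - g (\<omega> i)))) \<partial>PiM {..<n} (\<lambda>_. M))
           \<le> ennreal (exp (real n * l\<^sup>2 * expectation (\<lambda>z. (g z)\<^sup>2) / (2 * (1 - l * c))))"
proof -
  interpret product_sigma_finite "\<lambda>_ :: nat. M"
    by unfold_locales
  define h where "h z = exp (l * (expectation g - g z))" for z
  have h_int: "integrable M h"
    unfolding h_def by (rule integrable_exp_centred[OF g_meas g_bdd])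
  have [measurable]: "h \<in> borel_measurable M"
    using h_int by (rule borel_measurable_integrable)
  have h_nonneg: "0 \<le> h z" for z
    unfolding h_def by simp
  have "(\<integral>\<^sup>+\<omega>. ennreal (exp (l * (\<Sum>i<n. expectation g - g (\<omega> i)))) \<partial>PiM {..<n} (\<lambda>_. M))
      = (\<integral>\<^sup>+\<omega>. (\<Prod>i<n. ennreal (h (\<omega> i))) \<partial>PiM {..<n} (\<lambda>_. M))"
    unfolding h_def by (simp add: sum_distrib_left exp_sum prod_ennreal)
  also have "\<dots> = (\<Prod>i<n. \<integral>\<^sup>+z. ennreal (h z) \<partial>M)"
    by (rule product_nn_integral_prod) auto
  also have "\<dots> = ennreal (expectation h ^ n)"
    using h_int h_nonneg by (simp add: nn_integral_eq_integral ennreal_power integral_nonneg)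
  also have "\<dots> \<le> ennreal (exp (l\<^sup>2 * expectation (\<lambda>z. (g z)\<^sup>2) / (2 * (1 - l * c))) ^ n)"
    unfolding h_def using centred_mgf_le[OF assms]
    by (intro ennreal_leI power_mono integral_nonneg) auto
  finally show ?thesis
    by (simp add: exp_of_nat_mult[symmetric] mult.assoc)
qed

end

locale lipschitz_experts = prob_space D
  for D :: "('x \<times> real) measure" +
  fixes M :: nat and b Cb :: real and f :: "nat \<Rightarrow> 'x \<Rightarrow> real"
    and loss :: "real \<Rightarrow> real \<Rightarrow> real" and \<theta>star :: "nat \<Rightarrow> real"
  assumes f_meas: "\<And>j. j < M \<Longrightarrow> (\<lambda>z. f j (fst z)) \<in> borel_measurable D"
    and f_bdd: "AE z in D. \<forall>j<M. \<bar>f j (fst z)\<bar> \<le> b"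
    and loss_meas: "\<And>j. j < M \<Longrightarrow> (\<lambda>z. loss (snd z) (f j (fst z))) \<in> borel_measurable D"
    and Cb_pos: "Cb > 0"
    and loss_lip: "AE z in D. \<forall>u v. \<bar>u\<bar> \<le> b \<longrightarrow> \<bar>v\<bar> \<le> b \<longrightarrow>
                      \<bar>loss (snd z) u - loss (snd z) v\<bar> \<le> Cb * \<bar>u - v\<bar>"
    and theta_star: "\<theta>star \<in> simplexM M"
begin

definition excess_loss :: "nat \<Rightarrow> 'x \<times> real \<Rightarrow> real" where
  "excess_loss j z = loss (snd z) (f j (fst z)) - (\<Sum>k<M. \<theta>star k * loss (snd z) (f k (fst z)))"

definition Hmat_theta_star :: "nat \<Rightarrow> real" where
  "Hmat_theta_star j = (\<Sum>k<M. Hmat D f j k * \<theta>star k)"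

lemma theta_star_nonneg: "k < M \<Longrightarrow> 0 \<le> \<theta>star k"
  and theta_star_sum: "(\<Sum>k<M. \<theta>star k) = 1"
  using theta_star by (auto simp: simplexM_def)

lemma excess_loss_eq_weighted_differences:
  "excess_loss j z
     = (\<Sum>k<M. \<theta>star k * (loss (snd z) (f j (fst z)) - loss (snd z) (f k (fst z))))"
  unfolding excess_loss_def
  by (simp add: right_diff_distrib sum_subtractf sum_distrib_right[symmetric] theta_star_sum)

lemma excess_loss_measurable: "j < M \<Longrightarrow> excess_loss j \<in> borel_measurable D"
  unfolding excess_loss_def using loss_meas by measurable

lemma AE_pairwise_bounds:
  "AE z in D. \<forall>j<M. \<forall>k<M.
     \<bar>loss (snd z) (f j (fst z)) - loss (snd z) (f k (fst z))\<bar> \<le> Cb * \<bar>f j (fst z) - f k (fst z)\<bar>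
     \<and> \<bar>f j (fst z) - f k (fst z)\<bar> \<le> 2 * b"
  using f_bdd loss_lip
proof eventually_elim
  case (elim z)
  show ?case
  proof (intro allI impI conjI)
    fix j k assume "j < M" "k < M"
    then have "\<bar>f j (fst z)\<bar> \<le> b" "\<bar>f k (fst z)\<bar> \<le> b"
      using elim by auto
    then show "\<bar>loss (snd z) (f j (fst z)) - loss (snd z) (f k (fst z))\<bar> \<le> Cb * \<bar>f j (fst z) - f k (fst z)\<bar>"
        and "\<bar>f j (fst z) - f k (fst z)\<bar> \<le> 2 * b"
      using elim by auto
  qed
qed

lemma AE_excess_loss_bounded: "j < M \<Longrightarrow> AE z in D. \<bar>excess_loss j z\<bar> \<le> 2 * b * Cb"
  using AE_pairwise_bounds
proof eventually_elim
  case (elim z)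
  assume j: "j < M"
  have "\<bar>excess_loss j z\<bar>
      \<le> (\<Sum>k<M. \<bar>\<theta>star k * (loss (snd z) (f j (fst z)) - loss (snd z) (f k (fst z)))\<bar>)"
    unfolding excess_loss_eq_weighted_differences by (rule sum_abs)
  also have "\<dots> \<le> (\<Sum>k<M. \<theta>star k * (2 * b * Cb))"
  proof (intro sum_mono)
    fix k assume k: "k \<in> {..<M}"
    have "\<bar>loss (snd z) (f j (fst z)) - loss (snd z) (f k (fst z))\<bar> \<le> Cb * (2 * b)"
      using elim j k Cb_pos by (meson lessThan_iff mult_left_mono less_imp_le order_trans)
    then have "\<theta>star k * \<bar>loss (snd z) (f j (fst z)) - loss (snd z) (f k (fst z))\<bar>
        \<le> \<theta>star k * (Cb * (2 * b))"
      using theta_star_nonneg k by (intro mult_left_mono) auto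
    then show "\<bar>\<theta>star k * (loss (snd z) (f j (fst z)) - loss (snd z) (f k (fst z)))\<bar>
        \<le> \<theta>star k * (2 * b * Cb)"
      using theta_star_nonneg k by (simp add: abs_mult mult_ac)
  qed
  also have "\<dots> = 2 * b * Cb"
    by (simp add: sum_distrib_right[symmetric] theta_star_sum)
  finally show ?case .
qed

lemma Hmat_theta_star_nonneg: "0 \<le> Hmat_theta_star j"
  unfolding Hmat_theta_star_def Hmat_def using theta_star_nonneg
  by (intro sum_nonneg mult_nonneg_nonneg integral_nonneg_AE) auto

lemma excess_loss_second_moment_le:
  assumes j: "j < M"
  shows "expectation (\<lambda>z. (excess_loss j z)\<^sup>2) \<le> Cb\<^sup>2 * Hmat_theta_star j"
proof -
  have int_f: "integrable D (\<lambda>z. (f j (fst z) - f k (fst z))\<^sup>2)" if "k < M" for k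
  proof (rule integrable_const_bound[where B = "(2 * b)\<^sup>2"])
    show "AE z in D. norm ((f j (fst z) - f k (fst z))\<^sup>2) \<le> (2 * b)\<^sup>2"
      using AE_pairwise_bounds
    proof eventually_elim
      case (elim z)
      then have "\<bar>f j (fst z) - f k (fst z)\<bar>\<^sup>2 \<le> (2 * b)\<^sup>2"
        using j that by (intro power_mono) auto
      then show ?case
        by simp
    qed
  qed (use f_meas j that in auto)
  have int_excess: "integrable D (\<lambda>z. (excess_loss j z)\<^sup>2)"
  proof (rule integrable_const_bound[where B = "(2 * b * Cb)\<^sup>2"])
    show "AE z in D. norm ((excess_loss j z)\<^sup>2) \<le> (2 * b * Cb)\<^sup>2"
      using AE_excess_loss_bounded[OF j]
    proof eventually_elim
      case (elim z)
      then have "\<bar>excess_loss j z\<bar>\<^sup>2 \<le> (2 * b * Cb)\<^sup>2"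
        by (intro power_mono) auto
      then show ?case
        by simp
    qed
  qed (use excess_loss_measurable[OF j] in simp)
  have "AE z in D. (excess_loss j z)\<^sup>2 \<le> Cb\<^sup>2 * (\<Sum>k<M. \<theta>star k * (f j (fst z) - f k (fst z))\<^sup>2)"
    using AE_pairwise_bounds
  proof eventually_elim
    case (elim z)
    have "(excess_loss j z)\<^sup>2
        \<le> (\<Sum>k<M. \<theta>star k * (loss (snd z) (f j (fst z)) - loss (snd z) (f k (fst z)))\<^sup>2)"
      unfolding excess_loss_eq_weighted_differences
      using theta_star_nonneg theta_star_sum by (intro power2_weighted_mean_le) auto
    also have "\<dots> \<le> (\<Sum>k<M. \<theta>star k * (Cb\<^sup>2 * (f j (fst z) - f k (fst z))\<^sup>2))"
    proof (intro sum_mono mult_left_mono)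
      fix k assume "k \<in> {..<M}"
      then have "\<bar>loss (snd z) (f j (fst z)) - loss (snd z) (f k (fst z))\<bar>
          \<le> \<bar>Cb * (f j (fst z) - f k (fst z))\<bar>"
        using elim j Cb_pos by (simp add: abs_mult)
      then show "(loss (snd z) (f j (fst z)) - loss (snd z) (f k (fst z)))\<^sup>2
          \<le> Cb\<^sup>2 * (f j (fst z) - f k (fst z))\<^sup>2"
        by (simp add: abs_le_square_iff power_mult_distrib)
    qed (use theta_star_nonneg in auto)
    finally show ?case
      by (simp add: sum_distrib_left mult_ac)
  qed
  then have "expectation (\<lambda>z. (excess_loss j z)\<^sup>2)
      \<le> expectation (\<lambda>z. Cb\<^sup>2 * (\<Sum>k<M. \<theta>star k * (f j (fst z) - f k (fst z))\<^sup>2))"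
    using int_excess int_f by (intro integral_mono_AE) auto
  also have "\<dots> = Cb\<^sup>2 * Hmat_theta_star j"
    using int_f unfolding Hmat_theta_star_def Hmat_def by (simp add: mult_ac)
  finally show ?thesis .
qed

lemma weighted_loss_difference_eq:
  assumes "\<theta> \<in> simplexM M"
  shows "(\<Sum>j<M. (\<theta> j - \<theta>star j) * loss (snd z) (f j (fst z))) = (\<Sum>j<M. \<theta> j * excess_loss j z)"
proof -
  have "(\<Sum>j<M. \<theta> j) = 1"
    using assms by (simp add: simplexM_def)
  then show ?thesis
    unfolding excess_loss_def
    by (simp add: right_diff_distrib left_diff_distrib sum_subtractf sum_distrib_right[symmetric])
qed

lemma deviation_exponent_eq:
  assumes \<theta>: "\<theta> \<in> simplexM M" and n: "0 < n" and \<pi>: "\<And>j. j < M \<Longrightarrow> 0 < \<pi> j"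
  shows "s * (\<nu> * ((\<integral>z. (\<Sum>j<M. (\<theta> j - \<theta>star j) * loss (snd z) (f j (fst z))) \<partial>D)
                    - (1 / real n) * (\<Sum>i<n. \<Sum>j<M. (\<theta> j - \<theta>star j)
                                              * loss (snd (\<omega> i)) (f j (fst (\<omega> i)))))
                - \<mu> * (\<Sum>j<M. \<Sum>k<M. \<theta> j * Hmat D f j k * \<theta>star k))
           - Kdiv M \<pi> \<theta>
       = (\<Sum>j<M. \<theta> j * (ln (\<pi> j) - s * \<mu> * Hmat_theta_star j
              + s * \<nu> / real n * (\<Sum>i<n. expectation (excess_loss j) - excess_loss j (\<omega> i))))"
proof -
  have integrable: "integrable D (excess_loss j)" if "j < M" for j
    using excess_loss_measurable AE_excess_loss_bounded that
    by (intro integrable_const_bound[where B = "2 * b * Cb"]) auto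
  have "(\<integral>z. (\<Sum>j<M. (\<theta> j - \<theta>star j) * loss (snd z) (f j (fst z))) \<partial>D)
      = expectation (\<lambda>z. \<Sum>j<M. \<theta> j * excess_loss j z)"
    using weighted_loss_difference_eq[OF \<theta>] by simp
  also have "\<dots> = (\<Sum>j<M. expectation (\<lambda>z. \<theta> j * excess_loss j z))"
    using integrable by (intro Bochner_Integration.integral_sum) auto
  also have "\<dots> = (\<Sum>j<M. \<theta> j * expectation (excess_loss j))"
    by simp
  finally have risk: "(\<integral>z. (\<Sum>j<M. (\<theta> j - \<theta>star j) * loss (snd z) (f j (fst z))) \<partial>D)
      = (\<Sum>j<M. \<theta> j * (real n * expectation (excess_loss j))) / real n"
    using n by (simp add: sum_divide_distrib)
  have empirical: "(\<Sum>i<n. \<Sum>j<M. (\<theta> j - \<theta>star j) * loss (snd (\<omega> i)) (f j (fst (\<omega> i))))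
      = (\<Sum>j<M. \<theta> j * (\<Sum>i<n. excess_loss j (\<omega> i)))"
    unfolding weighted_loss_difference_eq[OF \<theta>] by (simp add: sum_distrib_left sum.swap[of _ "{..<n}"])
  have penalty: "(\<Sum>j<M. \<Sum>k<M. \<theta> j * Hmat D f j k * \<theta>star k) = (\<Sum>j<M. \<theta> j * Hmat_theta_star j)"
    unfolding Hmat_theta_star_def by (simp add: sum_distrib_left mult.assoc)
  have prior: "Kdiv M \<pi> \<theta> = - (\<Sum>j<M. \<theta> j * ln (\<pi> j))"
    unfolding Kdiv_def sum_negf[symmetric] using \<pi> by (intro sum.cong) (simp_all add: ln_div)
  show ?thesis
    unfolding risk empirical penalty prior using n
    by (simp add: sum_distrib_left sum_subtractf sum_divide_distrib sum.distrib
        right_diff_distrib distrib_left mult_ac)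
qed

lemma expert_exponential_moment_le:
  assumes j: "j < M" and p: "0 < p" and l: "0 \<le> l" "l * (2 * b * Cb) < 1"
    and rate: "real n * l\<^sup>2 * Cb\<^sup>2 / (2 * (1 - l * (2 * b * Cb))) \<le> t"
  shows "(\<integral>\<^sup>+\<omega>. ennreal (exp (ln p - t * Hmat_theta_star j
            + l * (\<Sum>i<n. expectation (excess_loss j) - excess_loss j (\<omega> i)))) \<partial>PiM {..<n} (\<lambda>_. D))
         \<le> ennreal p"
proof -
  let ?V = "Hmat_theta_star j"
  define c where "c = p * exp (- t * ?V)"
  have [measurable]: "excess_loss j \<in> borel_measurable D"
    using excess_loss_measurable[OF j] .
  have "real n * l\<^sup>2 * expectation (\<lambda>z. (excess_loss j z)\<^sup>2) / (2 * (1 - l * (2 * b * Cb)))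
      \<le> real n * l\<^sup>2 * (Cb\<^sup>2 * ?V) / (2 * (1 - l * (2 * b * Cb)))"
    using excess_loss_second_moment_le[OF j] l by (intro divide_right_mono mult_left_mono) (auto simp: mult_ac)
  also have "\<dots> = real n * l\<^sup>2 * Cb\<^sup>2 / (2 * (1 - l * (2 * b * Cb))) * ?V"
    by simp
  also have "\<dots> \<le> t * ?V"
    using rate Hmat_theta_star_nonneg by (rule mult_right_mono)
  finally have exponent: "real n * l\<^sup>2 * expectation (\<lambda>z. (excess_loss j z)\<^sup>2) / (2 * (1 - l * (2 * b * Cb)))
      \<le> t * ?V" .
  have mgf: "(\<integral>\<^sup>+\<omega>. ennreal (exp (l * (\<Sum>i<n. expectation (excess_loss j) - excess_loss j (\<omega> i))))
      \<partial>PiM {..<n} (\<lambda>_. D)) \<le> ennreal (exp (t * ?V))"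
    by (rule order_trans[OF iid_centred_sum_mgf_le[OF excess_loss_measurable[OF j] AE_excess_loss_bounded[OF j] l]])
      (intro ennreal_leI, subst exp_le_cancel_iff, rule exponent)
  have "exp (ln p - t * ?V + l * S) = c * exp (l * S)" for S
    using p by (simp add: c_def exp_add exp_diff exp_minus field_simps)
  then have "(\<integral>\<^sup>+\<omega>. ennreal (exp (ln p - t * ?V
            + l * (\<Sum>i<n. expectation (excess_loss j) - excess_loss j (\<omega> i)))) \<partial>PiM {..<n} (\<lambda>_. D))
      = (\<integral>\<^sup>+\<omega>. ennreal c * ennreal (exp (l * (\<Sum>i<n. expectation (excess_loss j) - excess_loss j (\<omega> i))))
           \<partial>PiM {..<n} (\<lambda>_. D))"
    using p by (simp add: c_def ennreal_mult')
  also have "\<dots> = ennreal c * (\<integral>\<^sup>+\<omega>. ennreal (exp (l * (\<Sum>i<n. expectation (excess_loss j) - excess_loss j (\<omega> i))))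
           \<partial>PiM {..<n} (\<lambda>_. D))"
    by (rule nn_integral_cmult) measurable
  also have "\<dots> \<le> ennreal c * ennreal (exp (t * ?V))"
    using mgf by (rule mult_left_mono) simp
  also have "\<dots> = ennreal p"
    using p by (simp add: c_def ennreal_mult'[symmetric] exp_minus)
  finally show ?thesis .
qed

lemma mixture_exponential_moment_le:
  assumes \<pi>: "\<And>j. j < M \<Longrightarrow> 0 < \<pi> j" "(\<Sum>j<M. \<pi> j) = 1"
    and l: "0 \<le> l" "l * (2 * b * Cb) < 1"
    and rate: "real n * l\<^sup>2 * Cb\<^sup>2 / (2 * (1 - l * (2 * b * Cb))) \<le> t"
  shows "(\<integral>\<^sup>+\<omega>. ennreal (\<Sum>j<M. exp (ln (\<pi> j) - t * Hmat_theta_star j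
            + l * (\<Sum>i<n. expectation (excess_loss j) - excess_loss j (\<omega> i)))) \<partial>PiM {..<n} (\<lambda>_. D))
         \<le> 1"
proof -
  let ?E = "\<lambda>j \<omega>. ennreal (exp (ln (\<pi> j) - t * Hmat_theta_star j
            + l * (\<Sum>i<n. expectation (excess_loss j) - excess_loss j (\<omega> i))))"
  have measurable: "?E j \<in> borel_measurable (PiM {..<n} (\<lambda>_. D))" if "j < M" for j
  proof -
    have [measurable]: "excess_loss j \<in> borel_measurable D"
      using excess_loss_measurable[OF that] .
    show ?thesis
      by measurable
  qed
  have "(\<integral>\<^sup>+\<omega>. ennreal (\<Sum>j<M. exp (ln (\<pi> j) - t * Hmat_theta_star j
            + l * (\<Sum>i<n. expectation (excess_loss j) - excess_loss j (\<omega> i)))) \<partial>PiM {..<n} (\<lambda>_. D))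
      = (\<integral>\<^sup>+\<omega>. (\<Sum>j<M. ?E j \<omega>) \<partial>PiM {..<n} (\<lambda>_. D))"
    by simp
  also have "\<dots> = (\<Sum>j<M. \<integral>\<^sup>+\<omega>. ?E j \<omega> \<partial>PiM {..<n} (\<lambda>_. D))"
    using measurable by (intro nn_integral_sum) auto
  also have "\<dots> \<le> (\<Sum>j<M. ennreal (\<pi> j))"
    using \<pi>(1) l rate by (intro sum_mono expert_exponential_moment_le) auto
  also have "\<dots> = 1"
    using \<pi> by (subst sum_ennreal) (auto simp: less_imp_le)
  finally show ?thesis .
qed

end

theorem mainTheorem7:
  fixes D :: "('x \<times> real) measure"
    and n M :: nat
    and b Cb \<nu> \<mu> s :: real
    and f :: "nat \<Rightarrow> 'x \<Rightarrow> real"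
    and loss :: "real \<Rightarrow> real \<Rightarrow> real"
    and \<pi> \<theta>star :: "nat \<Rightarrow> real"
    and \<theta>hat :: "(nat \<Rightarrow> 'x \<times> real) \<Rightarrow> nat \<Rightarrow> real"
  assumes D_prob: "prob_space D"
    and b_pos: "b > 0"
    and Y_bdd: "AE z in D. \<bar>snd z\<bar> \<le> b"
    and f_meas: "\<And>j. j < M \<Longrightarrow> (\<lambda>z. f j (fst z)) \<in> borel_measurable D"
    and f_bdd: "AE z in D. \<forall>j<M. \<bar>f j (fst z)\<bar> \<le> b"
    and loss_meas: "\<And>j. j < M \<Longrightarrow> (\<lambda>z. loss (snd z) (f j (fst z))) \<in> borel_measurable D"
    and Cb_pos: "Cb > 0"
    and loss_lip: "AE z in D. \<forall>u v. \<bar>u\<bar> \<le> b \<longrightarrow> \<bar>v\<bar> \<le> b \<longrightarrow>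
                      \<bar>loss (snd z) u - loss (snd z) v\<bar> \<le> Cb * \<bar>u - v\<bar>"
    and prior_pos: "\<And>j. j < M \<Longrightarrow> \<pi> j > 0"
    and prior_sum: "(\<Sum>j<M. \<pi> j) = 1"
    and nu: "0 < \<nu>" "\<nu> < 1"
    and mu: "\<mu> > 0"
    and theta_star: "\<theta>star \<in> simplexM M"
    and s_pos: "s > 0"
    and s_bound: "s < 2 * \<mu> * real n / (Cb * \<nu> * (\<nu> * Cb + 4 * \<mu> * b))"
    and thetahat_meas: "\<And>j. j < M \<Longrightarrow>
          (\<lambda>\<omega>. \<theta>hat \<omega> j) \<in> borel_measurable (PiM {..<n} (\<lambda>_. D))"
    and thetahat_simplex: "\<And>\<omega>. \<omega> \<in> space (PiM {..<n} (\<lambda>_. D)) \<Longrightarrow> \<theta>hat \<omega> \<in> simplexM M"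
  shows "(\<integral>\<^sup>+ \<omega>. ennreal (exp (
            s * (\<nu> * ((\<integral>z. (\<Sum>j<M. (\<theta>hat \<omega> j - \<theta>star j) * loss (snd z) (f j (fst z))) \<partial>D)
                     - (1 / real n) * (\<Sum>i<n. \<Sum>j<M. (\<theta>hat \<omega> j - \<theta>star j)
                                               * loss (snd (\<omega> i)) (f j (fst (\<omega> i)))))
                 - \<mu> * (\<Sum>j<M. \<Sum>k<M. \<theta>hat \<omega> j * Hmat D f j k * \<theta>star k))
            - Kdiv M \<pi> (\<theta>hat \<omega>)))
          \<partial>(PiM {..<n} (\<lambda>_. D))) \<le> 1"
proof -
  interpret lipschitz_experts D M b Cb f loss \<theta>star
    using D_prob f_meas f_bdd loss_meas Cb_pos loss_lip theta_star
    by (simp add: lipschitz_experts_def lipschitz_experts_axioms_def)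
  have n_pos: "0 < n" and small: "s * \<nu> / real n * (2 * b * Cb) < 1"
    and rate: "real n * (s * \<nu> / real n)\<^sup>2 * Cb\<^sup>2 / (2 * (1 - s * \<nu> / real n * (2 * b * Cb))) \<le> s * \<mu>"
    using step_size_conditions[OF b_pos Cb_pos nu(1) mu s_pos s_bound] by auto
  have mixture: "(\<integral>\<^sup>+\<omega>. ennreal (\<Sum>j<M. exp (ln (\<pi> j) - s * \<mu> * Hmat_theta_star j
      + s * \<nu> / real n * (\<Sum>i<n. expectation (excess_loss j) - excess_loss j (\<omega> i))))
      \<partial>PiM {..<n} (\<lambda>_. D)) \<le> 1"
    using s_pos nu by (intro mixture_exponential_moment_le prior_pos prior_sum small rate) auto
  \<comment> \<open>The integrand is dominated pointwise by a function free of \<open>\<theta>hat\<close>.\<close>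
  show ?thesis
    using mixture
    by (rule order_trans[rotated], intro nn_integral_mono ennreal_leI,
        subst deviation_exponent_eq[OF thetahat_simplex n_pos])
      (assumption | rule prior_pos exp_simplex_combination_le thetahat_simplex)+
qed

end
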